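(* Let $p$ be an odd prime, $m$ a positive integer, and let $1,\alpha,\beta\in\mathbb{F}_{p^m}$ be linearly independent over $\mathbb{F}_p$. Let $\eta$ be the quadratic character of $\mathbb{F}_{p^m}$ and $\epsilon_p=e^{2\pi i/p}$. If \[\Big|\sum_{y_1,y_2\in\mathbb{F}_p}\eta(1+y_1\alpha+y_2\beta)\,\epsilon_p^{-y_1y_2}\Big|\neq p,\] then the function $F:\mathbb{F}_{p^m}\times\mathbb{F}_p^2\to\mathbb{F}_p$, \[F(x,y_1,y_2)=\mathrm{Tr}_m(x^2)+\big(y_1+\mathrm{Tr}_m(\alpha x^2)\big)\big(y_2+\mathrm{Tr}_m(\beta x^2)\big),\] is a non-dual-bent function (i.e. $F$ is bent but its dual $F^*$ is not bent).
   Context: $\mathrm{Tr}_m$ is the absolute trace $\mathbb{F}_{p^m}\to\mathbb{F}_p$. Inner product on $\mathbb{F}_{p^m}\times\mathbb{F}_p^2$: $\langle (a,b_1,b_2),(x,y_1,y_2)\rangle=\mathrm{Tr}_m(ax)+b_1y_1+b_2y_2$. Walsh transform of $f:V\to\mathbb{F}_p$ ($\dim V=N$): $\widehat f(b)=\sum_{x\in V}\epsilon_p^{f(x)-\langle b,x\rangle}$; $f$ is bent if $|\widehat f(b)|=p^{N/2}$ for all $b$. For bent $f$ (odd $p$), $\widehat f(b)=\zeta_bp^{N/2}\epsilon_p^{f^*(b)}$ with $\zeta_b\in\{\pm1,\pm i\}$, defining the dual $f^*:V\to\mathbb{F}_p$. A bent function is dual-bent if $f^*$ is bent, and non-dual-bent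 otherwise. *)

theory Defs
  imports "HOL-Analysis.Analysis"
begin

text \<open>The field F_{p^m} is a finite field type 'a with CARD('a) = p^m.
  The prime field F_p is represented by the integers {0..<p}; an integer k stands
  for the residue class k mod p, embedded into 'a by of_int.\<close>

definition trace :: "nat \<Rightarrow> nat \<Rightarrow> 'a::{field,finite} \<Rightarrow> 'a" where
  "trace p m x = (\<Sum>i<m. x ^ (p ^ i))"

definition tr :: "nat \<Rightarrow> nat \<Rightarrow> 'a::{field,finite} \<Rightarrow> int" where
  "tr p m x = (THE k. k \<in> {0..<int p} \<and> of_int k = trace p m x)"

definition qchar :: "'a::{field,finite} \<Rightarrow> int" where
  "qchar x = (if x = 0 then 0 else if (\<exists>y. x = y ^ 2) then 1 else -1)"

text \<open>epsilon_p ^ k, for k an integer (only k mod p matters).\<close>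
definition ep :: "nat \<Rightarrow> int \<Rightarrow> complex" where
  "ep p k = cis (2 * pi * of_int k / of_nat p)"

definition Vsp :: "nat \<Rightarrow> ('a::{field,finite} \<times> int \<times> int) set" where
  "Vsp p = UNIV \<times> {0..<int p} \<times> {0..<int p}"

definition ip :: "nat \<Rightarrow> nat \<Rightarrow> ('a::{field,finite} \<times> int \<times> int) \<Rightarrow> ('a \<times> int \<times> int) \<Rightarrow> int" where
  "ip p m u v = (case u of (a, b1, b2) \<Rightarrow> case v of (x, y1, y2) \<Rightarrow>
      (tr p m (a * x) + b1 * y1 + b2 * y2) mod int p)"

definition walsh :: "nat \<Rightarrow> nat \<Rightarrow> (('a::{field,finite} \<times> int \<times> int) \<Rightarrow> int) \<Rightarrow> ('a \<times> int \<times> int) \<Rightarrow> complex" where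
  "walsh p m f b = (\<Sum>x\<in>Vsp p. ep p (f x - ip p m b x))"

definition bent :: "nat \<Rightarrow> nat \<Rightarrow> (('a::{field,finite} \<times> int \<times> int) \<Rightarrow> int) \<Rightarrow> bool" where
  "bent p m f \<longleftrightarrow> (\<forall>b\<in>Vsp p. cmod (walsh p m f b) = sqrt (real p) ^ (m + 2))"

definition dual :: "nat \<Rightarrow> nat \<Rightarrow> (('a::{field,finite} \<times> int \<times> int) \<Rightarrow> int) \<Rightarrow> ('a \<times> int \<times> int) \<Rightarrow> int" where
  "dual p m f b = (THE k. k \<in> {0..<int p} \<and>
      (\<exists>z\<in>{1, -1, \<i>, -\<i>}. walsh p m f b = z * complex_of_real (sqrt (real p) ^ (m + 2)) * ep p k))"

definition non_dual_bent :: "nat \<Rightarrow> nat \<Rightarrow> (('a::{field,finite} \<times> int \<times> int) \<Rightarrow> int) \<Rightarrow> bool" where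
  "non_dual_bent p m f \<longleftrightarrow> bent p m f \<and> \<not> bent p m (dual p m f)"

end

theory Submission
  imports Defs "HOL-Computational_Algebra.Polynomial" "HOL-Number_Theory.Residues" "HOL-Library.Real_Mod"
begin

text \<open>Summing the Walsh transform of \<open>F\<close> over \<open>(y1, y2)\<close> first removes the bilinear term and
  leaves a quadratic Gauss sum in \<open>x\<close> with coefficient \<open>c\<^sub>b = 1 + b1 \<alpha> + b2 \<beta>\<close>, which is nonzero by
  linear independence. Since \<open>G(c) = \<eta>(c) G(1)\<close> and \<open>G(1) = \<zeta> p^(m/2)\<close> with \<open>\<zeta>\<^sup>4 = 1\<close>, this gives
  \<open>W\<^sub>F(a, b1, b2) = \<eta>(c\<^sub>b) \<zeta> p^((m+2)/2) \<epsilon>\<^sub>p^(-b1 b2 + Tr(-a\<^sup>2/(4 c\<^sub>b))))\<close>, so \<open>F\<close> is bent and its dual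
  is \<open>-b1 b2 + Tr(-a\<^sup>2/(4 c\<^sub>b))\<close>. The dual has the same shape, and its Walsh value at \<open>0\<close> is
  \<open>\<eta>(-1) G(1) S\<close> with \<open>S\<close> the character sum of the hypothesis; its modulus \<open>p^(m/2) |S|\<close> is
  \<open>p^((m+2)/2)\<close> only if \<open>|S| = p\<close>.\<close>

section \<open>Additive characters of \<open>\<int>/p\<close>\<close>

lemma ep_add: "ep p (a + b) = ep p a * ep p b"
  by (simp add: ep_def cis_mult distrib_left add_divide_distrib)

lemma ep_0 [simp]: "ep p 0 = 1"
  by (simp add: ep_def)

lemma norm_ep [simp]: "norm (ep p k) = 1"
  by (simp add: ep_def)

lemma cnj_ep: "cnj (ep p k) = ep p (- k)"
  by (simp add: ep_def cis_cnj)

lemma ep_power: "ep p a ^ n = ep p (int n * a)"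
  by (induction n) (simp_all add: ep_add distrib_right)

lemma ep_eq_1_iff:
  assumes "p > 0"
  shows "ep p k = 1 \<longleftrightarrow> int p dvd k"
proof
  assume "ep p k = 1"
  then obtain n :: int where "2 * pi * of_int k / of_nat p = of_int n * (2 * pi)"
    unfolding ep_def cis_eq_1_iff by blast
  then have "real_of_int k = real_of_int (int p * n)"
    using assms by (simp add: field_simps)
  then show "int p dvd k"
    by (simp only: of_int_eq_iff) simp
next
  assume "int p dvd k"
  then obtain n where "k = int p * n"
    by blast
  then have "2 * pi * of_int k / of_nat p = of_int n * (2 * pi)"
    using assms by (simp add: field_simps)
  then show "ep p k = 1"
    unfolding ep_def cis_eq_1_iff by blast
qed

lemma ep_cong:
  assumes "p > 0" and "a mod int p = b mod int p"
  shows "ep p a = ep p b"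
proof -
  have "int p dvd a - b"
    using assms(2) by (simp add: mod_eq_dvd_iff)
  then have "ep p (a - b) = 1"
    using assms(1) ep_eq_1_iff by blast
  then show ?thesis
    using ep_add[of p "a - b" b] by simp
qed

lemma ep_mod:
  assumes "p > 0"
  shows "ep p (a mod int p) = ep p a"
  using assms by (intro ep_cong) auto

lemma sum_ep_linear:
  assumes "p > 0"
  shows "(\<Sum>z\<in>{0..<int p}. ep p (k * z)) = (if int p dvd k then of_nat p else 0)"
proof -
  have "(\<Sum>z\<in>{0..<int p}. ep p (k * z)) = (\<Sum>i<p. ep p k ^ i)"
    by (rule sum.reindex_bij_witness[of _ int nat]) (auto simp: ep_power mult.commute)
  also have "\<dots> = (if int p dvd k then of_nat p else 0)"
  proof (cases "int p dvd k")
    case False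
    then have "ep p k \<noteq> 1"
      using ep_eq_1_iff[OF assms] by blast
    moreover have "ep p k ^ p = 1"
      using ep_eq_1_iff[OF assms] by (simp add: ep_power)
    ultimately show ?thesis
      using False by (simp add: geometric_sum)
  next
    case True
    then have "ep p k = 1"
      using ep_eq_1_iff[OF assms] by blast
    then show ?thesis
      using True by simp
  qed
  finally show ?thesis .
qed

text \<open>Summing over \<open>y2\<close> first forces \<open>y1 \<equiv> b2 - A (mod p)\<close>.\<close>
lemma sum_ep_bilinear:
  assumes "p > 0"
  shows "(\<Sum>y1\<in>{0..<int p}. \<Sum>y2\<in>{0..<int p}. ep p (T + (y1 + A) * (y2 + B) - b1 * y1 - b2 * y2))
       = of_nat p * ep p (T + b1 * A + b2 * B - b1 * b2)"
proof -
  define r where "r = (b2 - A) mod int p"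
  have r: "r \<in> {0..<int p}"
    using assms by (simp add: r_def)
  have inner: "(\<Sum>y2\<in>{0..<int p}. ep p (T + (y1 + A) * (y2 + B) - b1 * y1 - b2 * y2))
      = (if y1 = r then of_nat p * ep p (T + (y1 + A) * B - b1 * y1) else 0)"
    if y1: "y1 \<in> {0..<int p}" for y1
  proof -
    have "int p dvd (y1 + A - b2) \<longleftrightarrow> y1 = r"
      using mod_eq_dvd_iff[of y1 "int p" "b2 - A"] y1 by (simp add: r_def algebra_simps)
    moreover have "ep p (T + (y1 + A) * (y2 + B) - b1 * y1 - b2 * y2)
        = ep p (T + (y1 + A) * B - b1 * y1) * ep p ((y1 + A - b2) * y2)" for y2
      by (simp add: ep_add[symmetric] algebra_simps)
    ultimately show ?thesis
      by (simp add: sum_distrib_left[symmetric] sum_ep_linear[OF assms])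
  qed
  have "[r = b2 - A] (mod int p)"
    by (simp add: r_def cong_def)
  then have "[T + (r + A) * B - b1 * r = T + (b2 - A + A) * B - b1 * (b2 - A)] (mod int p)"
    by (intro cong_add cong_diff cong_mult cong_refl)
  then have "ep p (T + (r + A) * B - b1 * r) = ep p (T + b1 * A + b2 * B - b1 * b2)"
    using assms by (intro ep_cong) (simp_all add: cong_def algebra_simps)
  then show ?thesis
    using r by (simp add: inner)
qed

section \<open>The field with \<open>p^m\<close> elements and its trace\<close>

lemma sum_UNIV_translate:
  fixes f :: "'a::ab_group_add \<Rightarrow> 'b::comm_monoid_add"
  shows "(\<Sum>x\<in>UNIV. f (x + c)) = (\<Sum>x\<in>UNIV. f x)"
  by (rule sum.reindex_bij_witness[of _ "\<lambda>x. x - c" "\<lambda>x. x + c"]) auto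

lemma sum_UNIV_dilate:
  fixes f :: "'a::field \<Rightarrow> 'b::comm_monoid_add"
  assumes "c \<noteq> 0"
  shows "(\<Sum>x\<in>UNIV. f (c * x)) = (\<Sum>x\<in>UNIV. f x)"
  using assms by (intro sum.reindex_bij_witness[of _ "\<lambda>x. x / c" "\<lambda>x. c * x"]) auto

locale prime_power_field =
  fixes p m :: nat and field_type :: "'a::{field,finite} itself"
  assumes prime_p: "prime p" and m_pos: "m > 0" and card_field: "CARD('a) = p ^ m"
begin

lemma p_pos: "p > 0"
  using prime_p by (simp add: prime_gt_0_nat)

lemma CHAR_field: "CHAR('a) = p"
proof -
  have "prime CHAR('a)"
    by (intro prime_CHAR_semidom finite_imp_CHAR_pos) simp
  moreover have "CHAR('a) dvd p ^ m"
    using CHAR_dvd_CARD[where 'a='a] card_field by simp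
  ultimately have "CHAR('a) dvd p"
    using prime_dvd_power by blast
  then show ?thesis
    using \<open>prime CHAR('a)\<close> prime_p primes_dvd_imp_eq by blast
qed

lemma of_int_eq_iff_mod: "(of_int a :: 'a) = of_int b \<longleftrightarrow> a mod int p = b mod int p"
  using of_int_eq_iff_cong_CHAR[where 'a='a, of a b] CHAR_field by (simp add: cong_def)

lemma frobenius_add: "((x::'a) + y) ^ (p ^ i) = x ^ (p ^ i) + y ^ (p ^ i)"
  using freshmans_dream'[of "p ^ i" i x y] CHAR_field prime_p by simp

lemma frobenius_sum: "(sum (f::'b \<Rightarrow> 'a) A) ^ (p ^ i) = (\<Sum>j\<in>A. f j ^ (p ^ i))"
  using freshmans_dream_sum'[of "p ^ i" i f A] CHAR_field prime_p by simp

text \<open>Multiplication by \<open>x \<noteq> 0\<close> permutes the units, hence \<open>x^(q-1) = 1\<close>.\<close>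
lemma power_card_eq_self: "(x::'a) ^ CARD('a) = x"
proof (cases "x = 0")
  case False
  let ?U = "UNIV - {0::'a}"
  have "(\<Prod>y\<in>?U. x * y) = (\<Prod>y\<in>?U. y)"
    using False by (intro prod.reindex_bij_witness[of _ "\<lambda>y. y / x" "\<lambda>y. x * y"]) auto
  moreover have "(\<Prod>y\<in>?U. x * y) = x ^ card ?U * (\<Prod>y\<in>?U. y)"
    by (simp add: prod.distrib)
  moreover have "(\<Prod>y\<in>?U. y) \<noteq> 0"
    by simp
  ultimately have "x ^ card ?U = 1"
    by simp
  moreover have "CARD('a) = Suc (card ?U)"
  proof -
    have "card ?U = CARD('a) - 1"
      by (rule card_Diff_singleton) simp
    moreover have "CARD('a) > 0"
      by (rule finite_UNIV_card_ge_0) simp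
    ultimately show ?thesis
      by arith
  qed
  ultimately show ?thesis
    by (metis power_Suc mult_1_right)
next
  case True
  moreover have "CARD('a) \<noteq> 0"
    by simp
  ultimately show ?thesis
    by (simp add: power_0_left)
qed

abbreviation Tr :: "'a \<Rightarrow> 'a" where "Tr \<equiv> trace p m"

lemma trace_add: "Tr (x + y) = Tr x + Tr y"
  by (simp add: trace_def frobenius_add sum.distrib)

lemma trace_0: "Tr 0 = 0"
  using p_pos by (simp add: trace_def power_0_left)

lemma trace_neg: "Tr (- x) = - Tr x"
  using trace_add[of "- x" x] trace_0 by (simp add: eq_neg_iff_add_eq_0)

lemma trace_diff: "Tr (x - y) = Tr x - Tr y"
  using trace_add[of x "- y"] trace_neg[of y] by simp

lemma trace_of_nat_mult: "Tr (of_nat n * x) = of_nat n * Tr x"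
  by (induction n) (simp_all add: trace_0 trace_add distrib_right)

lemma trace_of_int_mult: "Tr (of_int k * x) = of_int k * Tr x"
proof (cases "k \<ge> 0")
  case True
  then show ?thesis
    using trace_of_nat_mult[of "nat k" x] by simp
next
  case False
  then show ?thesis
    using trace_of_nat_mult[of "nat (- k)" x] trace_neg[of "of_nat (nat (- k)) * x"] by simp
qed

lemma power_p_power_m_eq_self: "(x::'a) ^ (p ^ m) = x"
  using power_card_eq_self card_field by simp

lemma trace_power_p: "Tr x ^ p = Tr x"
proof -
  have "Tr x ^ p = (\<Sum>i<m. x ^ (p ^ Suc i))"
    using frobenius_sum[of "\<lambda>i. x ^ (p ^ i)" "{..<m}" 1]
    by (simp add: trace_def power_mult[symmetric] mult.commute)
  also have "\<dots> = Tr x"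
    unfolding trace_def using sum.lessThan_Suc_shift[of "\<lambda>i. x ^ (p ^ i)" m]
    by (simp add: power_p_power_m_eq_self add.commute)
  finally show ?thesis .
qed

lemma of_int_power_p: "(of_int k :: 'a) ^ p = of_int k"
proof -
  have "(of_nat n :: 'a) ^ p = of_nat n" for n
    using frobenius_sum[of "\<lambda>_. 1" "{..<n}" 1] by simp
  then show ?thesis
    using of_int_eq_iff_mod[of "k mod int p" k] p_pos
    by (metis mod_mod_trivial of_nat_nat pos_mod_sign of_nat_0_less_iff)
qed

text \<open>The prime field is the set of roots of \<open>X^p - X\<close>: it supplies \<open>p\<close> distinct roots, and there are no more.\<close>
lemma roots_power_p_eq_prime_field: "{t::'a. t ^ p = t} = of_int ` {0..<int p}"
proof -
  define P :: "'a poly" where "P = Polynomial.monom 1 p + [:0, -1:]"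
  have "degree P = p"
    using prime_gt_1_nat[OF prime_p] unfolding P_def
    by (subst degree_add_eq_left) (auto simp: degree_monom_eq)
  then have "P \<noteq> 0"
    using prime_p by (auto simp: prime_gt_0_nat)
  have roots: "{t. poly P t = 0} = {t::'a. t ^ p = t}"
    by (simp add: P_def poly_monom)
  have sub: "of_int ` {0..<int p} \<subseteq> {t::'a. t ^ p = t}"
    using of_int_power_p by auto
  have "inj_on (of_int :: int \<Rightarrow> 'a) {0..<int p}"
    by (auto simp: inj_on_def of_int_eq_iff_mod)
  then have "card (of_int ` {0..<int p} :: 'a set) = p"
    by (simp add: card_image)
  moreover have "card {t::'a. t ^ p = t} \<le> p"
    using card_poly_roots_bound[OF \<open>P \<noteq> 0\<close>] \<open>degree P = p\<close> roots by simp
  moreover have "card (of_int ` {0..<int p} :: 'a set) \<le> card {t::'a. t ^ p = t}"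
    by (rule card_mono[OF _ sub]) simp
  ultimately have "card (of_int ` {0..<int p} :: 'a set) = card {t::'a. t ^ p = t}"
    by linarith
  then have "of_int ` {0..<int p} = {t::'a. t ^ p = t}"
    by (rule card_subset_eq[OF finite sub])
  then show ?thesis
    by (rule sym)
qed

lemma tr_spec: "tr p m x \<in> {0..<int p} \<and> of_int (tr p m x) = Tr x"
proof -
  have "Tr x \<in> of_int ` {0..<int p}"
    using trace_power_p[of x] by (simp flip: roots_power_p_eq_prime_field)
  then obtain k where k: "k \<in> {0..<int p}" "of_int k = Tr x"
    by (auto elim!: imageE)
  have "\<exists>!k. k \<in> {0..<int p} \<and> of_int k = Tr x"
  proof (rule ex1I[of _ k])
    fix j
    assume "j \<in> {0..<int p} \<and> of_int j = Tr x"
    then show "j = k"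
      using k of_int_eq_iff_mod[of j k] by (auto simp: mod_pos_pos_trivial)
  qed (use k in auto)
  then show ?thesis
    unfolding tr_def by (rule theI')
qed

lemma of_int_tr: "of_int (tr p m x) = Tr x"
  using tr_spec by blast

lemma tr_0: "tr p m (0::'a) = 0"
  using tr_spec[of 0] of_int_eq_iff_mod[of "tr p m (0::'a)" 0] trace_0
  by (simp add: mod_pos_pos_trivial)

text \<open>\<open>Tr\<close> is given by a nonzero polynomial of degree \<open>p^(m-1) < p^m\<close>, so it cannot vanish everywhere.\<close>
lemma trace_not_identically_zero: "\<exists>v. Tr v \<noteq> 0"
proof (rule ccontr)
  assume "\<nexists>v. Tr v \<noteq> 0"
  define P :: "'a poly" where "P = (\<Sum>i<m. Polynomial.monom 1 (p ^ i))"
  have "{x. poly P x = 0} = UNIV"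
    using \<open>\<nexists>v. Tr v \<noteq> 0\<close> by (simp add: P_def poly_sum poly_monom trace_def)
  have "Polynomial.coeff P (p ^ (m - 1)) = (\<Sum>i<m. if i = m - 1 then 1 else 0)"
    using prime_gt_1_nat[OF prime_p]
    by (simp add: P_def Polynomial.coeff_sum Polynomial.coeff_monom power_inject_exp eq_commute)
  also have "\<dots> = 1"
    using m_pos by simp
  finally have "P \<noteq> 0"
    by auto
  have "degree P \<le> p ^ (m - 1)"
    unfolding P_def using m_pos prime_gt_1_nat[OF prime_p]
    by (intro degree_sum_le) (auto simp: degree_monom_eq)
  moreover have "card {x. poly P x = 0} \<le> degree P"
    by (rule card_poly_roots_bound[OF \<open>P \<noteq> 0\<close>])
  ultimately have "p ^ m \<le> p ^ (m - 1)"
    using \<open>{x. poly P x = 0} = UNIV\<close> card_field by simp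
  moreover have "p ^ (m - 1) < p ^ m"
    using m_pos prime_gt_1_nat[OF prime_p] by (intro power_strict_increasing) auto
  ultimately show False
    by simp
qed

definition add_char :: "'a \<Rightarrow> complex" where
  "add_char y = ep p (tr p m y)"

lemma add_char_eq_ep:
  assumes "Tr y = of_int k"
  shows "add_char y = ep p k"
proof -
  have "(of_int (tr p m y) :: 'a) = of_int k"
    using assms by (simp add: of_int_tr)
  then show ?thesis
    unfolding add_char_def using p_pos by (intro ep_cong) (simp_all add: of_int_eq_iff_mod)
qed

lemma add_char_add: "add_char (x + y) = add_char x * add_char y"
proof -
  have "Tr (x + y) = of_int (tr p m x + tr p m y)"
    by (simp add: trace_add of_int_tr)
  then have "add_char (x + y) = ep p (tr p m x + tr p m y)"
    by (rule add_char_eq_ep)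
  then show ?thesis
    by (simp add: ep_add add_char_def)
qed

lemma add_char_0 [simp]: "add_char 0 = 1"
  using add_char_eq_ep[of 0 0] trace_0 by simp

lemma add_char_uminus: "add_char (- x) = cnj (add_char x)"
proof -
  have "Tr (- x) = of_int (- tr p m x)"
    by (simp add: trace_neg of_int_tr)
  then have "add_char (- x) = ep p (- tr p m x)"
    by (rule add_char_eq_ep)
  then show ?thesis
    by (simp add: cnj_ep add_char_def)
qed

lemma sum_add_char_mult: "(\<Sum>y\<in>UNIV. add_char (u * y)) = (if u = 0 then of_nat CARD('a) else 0)"
proof (cases "u = 0")
  case False
  obtain v where v: "Tr v \<noteq> 0"
    using trace_not_identically_zero by blast
  have "add_char v \<noteq> 1"
  proof
    assume "add_char v = 1"
    then have "int p dvd tr p m v"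
      using ep_eq_1_iff[OF p_pos] by (simp add: add_char_def)
    then show False
      using v of_int_tr[of v] of_int_eq_iff_mod[of "tr p m v" 0] by simp
  qed
  let ?S = "\<Sum>y\<in>UNIV. add_char (u * y)"
  have "?S = (\<Sum>y\<in>UNIV. add_char (u * (y + v / u)))"
    by (rule sum_UNIV_translate[symmetric])
  also have "\<dots> = add_char v * ?S"
    using False by (simp add: distrib_left add_char_add sum_distrib_left mult.commute)
  finally have "(1 - add_char v) * ?S = 0"
    by (simp add: algebra_simps)
  then show ?thesis
    using False \<open>add_char v \<noteq> 1\<close> by simp
qed simp

end

section \<open>Quadratic Gauss sums\<close>

locale odd_prime_power_field = prime_power_field +
  assumes odd_p: "odd p"
begin

lemma two_neq_zero: "(2::'a) \<noteq> 0"
proof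
  assume "(2::'a) = 0"
  then have "p dvd 2"
    using of_nat_eq_0_iff_char_dvd[where 'a='a, of 2] CHAR_field by simp
  then have "p = 2"
    using prime_p two_is_prime_nat primes_dvd_imp_eq by blast
  then show False
    using odd_p by simp
qed

lemma four_neq_zero: "(4::'a) \<noteq> 0"
  using two_neq_zero mult_eq_0_iff[of "2::'a" 2] by simp

definition gauss_sum :: "'a \<Rightarrow> complex" where
  "gauss_sum c = (\<Sum>x\<in>UNIV. add_char (c * x ^ 2))"

lemma gauss_sum_0: "gauss_sum 0 = of_nat CARD('a)"
  by (simp add: gauss_sum_def)

lemma gauss_sum_square_mult:
  assumes "d \<noteq> 0"
  shows "gauss_sum (d ^ 2 * c) = gauss_sum c"
  unfolding gauss_sum_def using sum_UNIV_dilate[OF assms, of "\<lambda>x. add_char (c * x ^ 2)"]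
  by (simp add: power_mult_distrib mult_ac)

lemma gauss_sum_mult_cnj:
  assumes "c \<noteq> 0"
  shows "gauss_sum c * cnj (gauss_sum c) = of_nat CARD('a)"
proof -
  have shift: "(\<Sum>x\<in>UNIV. add_char (c * x ^ 2) * add_char (- (c * y ^ 2)))
      = (\<Sum>x\<in>UNIV. add_char (c * x ^ 2) * add_char (2 * c * x * y))" for y
  proof -
    have "c * (x + y) ^ 2 + - (c * y ^ 2) = c * x ^ 2 + 2 * c * x * y" for x
      by (simp add: power2_eq_square algebra_simps)
    then show ?thesis
      using sum_UNIV_translate[of "\<lambda>x. add_char (c * x ^ 2) * add_char (- (c * y ^ 2))" y]
      by (simp add: add_char_add[symmetric])
  qed
  have "gauss_sum c * cnj (gauss_sum c)
      = (\<Sum>x\<in>UNIV. add_char (c * x ^ 2)) * (\<Sum>y\<in>UNIV. add_char (- (c * y ^ 2)))"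
    by (simp add: gauss_sum_def cnj_sum add_char_uminus)
  also have "\<dots> = (\<Sum>y\<in>UNIV. \<Sum>x\<in>UNIV. add_char (c * x ^ 2) * add_char (- (c * y ^ 2)))"
    by (subst sum_product) (rule sum.swap)
  also have "\<dots> = (\<Sum>y\<in>UNIV. \<Sum>x\<in>UNIV. add_char (c * x ^ 2) * add_char (2 * c * x * y))"
    by (simp only: shift)
  also have "\<dots> = (\<Sum>x\<in>UNIV. add_char (c * x ^ 2) * (\<Sum>y\<in>UNIV. add_char ((2 * c * x) * y)))"
    by (subst sum.swap) (simp add: sum_distrib_left)
  also have "\<dots> = (\<Sum>x::'a\<in>UNIV. if x = 0 then of_nat CARD('a) else 0)"
    by (rule sum.cong[OF refl]) (use assms two_neq_zero in \<open>simp_all add: sum_add_char_mult\<close>)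
  finally show ?thesis
    by simp
qed

lemma sum_gauss_sum: "(\<Sum>c\<in>UNIV. gauss_sum c) = of_nat CARD('a)"
proof -
  have "(\<Sum>c\<in>UNIV. gauss_sum c) = (\<Sum>x\<in>UNIV. \<Sum>c\<in>UNIV. add_char (x ^ 2 * c))"
    unfolding gauss_sum_def by (subst sum.swap) (simp add: mult.commute)
  also have "\<dots> = (\<Sum>x::'a\<in>UNIV. if x = 0 then of_nat CARD('a) else 0)"
    by (rule sum.cong[OF refl]) (simp_all add: sum_add_char_mult)
  finally show ?thesis
    by simp
qed

lemma sum_add_char_quadratic:
  assumes "c \<noteq> 0"
  shows "(\<Sum>x\<in>UNIV. add_char (c * x ^ 2 - a * x)) = add_char (- (a ^ 2 / (4 * c))) * gauss_sum c"
proof -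
  define h where "h = a / (2 * c)"
  have a: "a = 2 * c * h"
    using assms two_neq_zero by (simp add: h_def)
  have "a ^ 2 / (4 * c) = c * h ^ 2"
    using assms four_neq_zero by (simp add: a power2_eq_square field_simps)
  moreover have "c * (x + h) ^ 2 - a * (x + h) = c * x ^ 2 - c * h ^ 2" for x
    by (simp add: a power2_eq_square algebra_simps)
  ultimately have square: "c * (x + h) ^ 2 - a * (x + h) = - (a ^ 2 / (4 * c)) + c * x ^ 2" for x
    by simp
  have "(\<Sum>x\<in>UNIV. add_char (c * x ^ 2 - a * x))
      = (\<Sum>x\<in>UNIV. add_char (c * (x + h) ^ 2 - a * (x + h)))"
    by (rule sum_UNIV_translate[symmetric])
  also have "\<dots> = (\<Sum>x\<in>UNIV. add_char (- (a ^ 2 / (4 * c))) * add_char (c * x ^ 2))"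
    by (simp only: square add_char_add)
  finally show ?thesis
    by (simp add: gauss_sum_def sum_distrib_left)
qed

definition nonzero_squares :: "'a set" where
  "nonzero_squares = {x. x \<noteq> 0 \<and> (\<exists>y. x = y ^ 2)}"

definition nonsquares :: "'a set" where
  "nonsquares = {x. \<nexists>y. x = y ^ 2}"

lemma card_square_roots:
  assumes "r \<noteq> 0"
  shows "card {y::'a. y ^ 2 = r ^ 2} = 2"
proof -
  have "{y::'a. y ^ 2 = r ^ 2} = {r, - r}"
    by (auto simp: power2_eq_iff)
  moreover have "r \<noteq> - r"
  proof
    assume "r = - r"
    then have "2 * r = 0"
      by (metis mult_2 add.right_inverse)
    then show False
      using assms two_neq_zero by simp
  qed
  ultimately show ?thesis
    by simp
qed

lemma card_nonzero_squares: "2 * card nonzero_squares = CARD('a) - 1"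
proof -
  have "UNIV - {0} = (\<Union>s\<in>nonzero_squares. {y::'a. y ^ 2 = s})"
    by (auto simp: nonzero_squares_def)
  then have "card (UNIV - {0::'a}) = card (\<Union>s\<in>nonzero_squares. {y::'a. y ^ 2 = s})"
    by simp
  also have "\<dots> = (\<Sum>s\<in>nonzero_squares. card {y::'a. y ^ 2 = s})"
    by (rule card_UN_disjoint) auto
  also have "\<dots> = (\<Sum>s\<in>nonzero_squares. 2)"
    by (rule sum.cong[OF refl]) (auto simp: nonzero_squares_def card_square_roots)
  finally show ?thesis
    by (simp add: card_Diff_singleton)
qed

lemma card_nonsquares: "card nonsquares = card nonzero_squares"
proof -
  have "nonsquares = (UNIV - {0}) - nonzero_squares"
    by (auto simp: nonsquares_def nonzero_squares_def)
  moreover have "card ((UNIV - {0::'a}) - nonzero_squares) = card (UNIV - {0::'a}) - card nonzero_squares"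
    by (rule card_Diff_subset) (auto simp: nonzero_squares_def)
  moreover have "card (UNIV - {0::'a}) = CARD('a) - 1"
    by (simp add: card_Diff_singleton)
  ultimately show ?thesis
    using card_nonzero_squares by simp
qed

lemma square_times_nonsquare:
  assumes "r \<noteq> 0" and "y \<in> nonsquares"
  shows "r ^ 2 * y \<in> nonsquares"
proof -
  have "y = (t / r) ^ 2" if "r ^ 2 * y = t ^ 2" for t
    using assms(1) that by (simp add: power_divide eq_divide_eq mult.commute[of y])
  then show ?thesis
    using assms(2) by (auto simp: nonsquares_def)
qed

text \<open>Multiplication by a nonsquare injects the nonzero squares into the nonsquares; both sets have the same size.\<close>
lemma nonsquares_eq_image:
  assumes "n \<in> nonsquares"
  shows "nonsquares = (*) n ` nonzero_squares"
proof -
  have sub: "(*) n ` nonzero_squares \<subseteq> nonsquares"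
    using square_times_nonsquare[OF _ assms] by (auto simp: nonzero_squares_def mult.commute)
  have "n \<noteq> 0"
    using assms by (auto simp: nonsquares_def)
  then have "inj_on ((*) n) nonzero_squares"
    by (auto simp: inj_on_def)
  then have "card ((*) n ` nonzero_squares) = card nonsquares"
    by (simp add: card_image card_nonsquares)
  then have "(*) n ` nonzero_squares = nonsquares"
    by (rule card_subset_eq[OF finite sub])
  then show ?thesis
    by (rule sym)
qed

lemma nonsquare_times_nonsquare:
  assumes "x \<in> nonsquares" and "y \<in> nonsquares"
  shows "\<exists>t. x * y = t ^ 2"
proof -
  obtain r where "y = x * r ^ 2"
    using assms nonsquares_eq_image[OF assms(1)] by (auto simp: nonzero_squares_def)
  then have "x * y = (x * r) ^ 2"
    by (simp add: power2_eq_square)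
  then show ?thesis ..
qed

lemma qchar_nonzero: "x \<noteq> 0 \<Longrightarrow> qchar (x::'a) \<in> {1, -1}"
  by (auto simp: qchar_def)

lemma qchar_square: "x \<noteq> 0 \<Longrightarrow> qchar ((x::'a) ^ 2) = 1"
  by (auto simp: qchar_def)

lemma qchar_mult: "qchar ((x::'a) * y) = qchar x * qchar y"
proof -
  have square_case: "qchar (r ^ 2 * b) = qchar (r ^ 2) * qchar b" if "r \<noteq> 0" for r b :: 'a
  proof (cases "b \<in> nonsquares")
    case True
    then show ?thesis
      using square_times_nonsquare[OF that True] that by (auto simp: qchar_def nonsquares_def)
  next
    case False
    then obtain s where "b = s ^ 2"
      by (auto simp: nonsquares_def)
    then have "r ^ 2 * b = (r * s) ^ 2"
      by (simp add: power_mult_distrib)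
    then show ?thesis
      using \<open>b = s ^ 2\<close> that by (auto simp: qchar_def)
  qed
  show ?thesis
  proof (cases "x = 0 \<or> y = 0")
    case False
    consider "x \<in> nonsquares" "y \<in> nonsquares" | r where "x = r ^ 2" | s where "y = s ^ 2"
      by (auto simp: nonsquares_def)
    then show ?thesis
    proof cases
      case 1
      then show ?thesis
        using nonsquare_times_nonsquare[OF 1] False by (auto simp: qchar_def nonsquares_def)
    next
      case 2
      then show ?thesis
        using square_case[of r y] False by simp
    next
      case 3
      then show ?thesis
        using square_case[of s x] False by (simp add: mult.commute)
    qed
  qed (auto simp: qchar_def)
qed

text \<open>Summing all Gauss sums over \<open>{0} \<union> squares \<union> nonsquares\<close> gives \<open>q + (q - 1)/2 \<cdot> (G 1 + G n) = q\<close>.\<close>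
lemma gauss_sum_nonsquare:
  assumes "n \<in> nonsquares"
  shows "gauss_sum n = - gauss_sum 1"
proof -
  have univ: "UNIV = insert 0 (nonzero_squares \<union> nonsquares)"
    by (auto simp: nonzero_squares_def nonsquares_def)
  have "(\<Sum>c\<in>UNIV. gauss_sum c) = gauss_sum 0 + (\<Sum>c\<in>nonzero_squares \<union> nonsquares. gauss_sum c)"
    unfolding univ by (rule sum.insert) (auto simp: nonzero_squares_def nonsquares_def)
  also have "(\<Sum>c\<in>nonzero_squares \<union> nonsquares. gauss_sum c)
      = (\<Sum>c\<in>nonzero_squares. gauss_sum c) + (\<Sum>c\<in>nonsquares. gauss_sum c)"
    by (rule sum.union_disjoint) (auto simp: nonzero_squares_def nonsquares_def)
  finally have "(\<Sum>c\<in>UNIV. gauss_sum c)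
      = gauss_sum 0 + ((\<Sum>c\<in>nonzero_squares. gauss_sum c) + (\<Sum>c\<in>nonsquares. gauss_sum c))" .
  moreover have "(\<Sum>c\<in>nonzero_squares. gauss_sum c) = (\<Sum>c\<in>nonzero_squares. gauss_sum 1)"
    by (rule sum.cong[OF refl]) (use gauss_sum_square_mult[of _ 1] in \<open>auto simp: nonzero_squares_def\<close>)
  moreover have "(\<Sum>c\<in>nonsquares. gauss_sum c) = (\<Sum>c\<in>nonsquares. gauss_sum n)"
  proof (rule sum.cong[OF refl])
    fix c
    assume "c \<in> nonsquares"
    then obtain r where "r \<noteq> 0" "c = r ^ 2 * n"
      unfolding nonsquares_eq_image[OF assms] by (auto simp: nonzero_squares_def mult.commute)
    then show "gauss_sum c = gauss_sum n"
      by (simp add: gauss_sum_square_mult)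
  qed
  ultimately have "of_nat (card nonzero_squares) * (gauss_sum 1 + gauss_sum n) = 0"
    using sum_gauss_sum gauss_sum_0 card_nonsquares by (simp add: algebra_simps)
  moreover have "nonzero_squares \<noteq> {}"
  proof -
    have "(1::'a) \<in> nonzero_squares"
      unfolding nonzero_squares_def by (auto intro!: exI[where x = 1])
    then show ?thesis
      by blast
  qed
  ultimately show ?thesis
    by (simp add: add_eq_0_iff2)
qed

lemma gauss_sum_eq_qchar:
  assumes "c \<noteq> 0"
  shows "gauss_sum c = of_int (qchar c) * gauss_sum 1"
proof (cases "c \<in> nonsquares")
  case True
  then show ?thesis
    using gauss_sum_nonsquare assms by (auto simp: qchar_def nonsquares_def)
next
  case False
  then obtain r where "c = r ^ 2" "r \<noteq> 0"
    using assms by (auto simp: nonsquares_def)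
  then show ?thesis
    using gauss_sum_square_mult[of r 1] by (auto simp: qchar_def)
qed

lemma gauss_sum_1_square: "gauss_sum 1 ^ 2 = of_int (qchar (-1::'a)) * of_nat CARD('a)"
proof -
  let ?e = "of_int (qchar (-1::'a)) :: complex"
  have "cnj (gauss_sum 1) = gauss_sum (-1)"
    by (simp add: gauss_sum_def cnj_sum add_char_uminus[symmetric])
  then have "?e * gauss_sum 1 ^ 2 = of_nat CARD('a)"
    using gauss_sum_mult_cnj[of 1] gauss_sum_eq_qchar[of "-1"]
    by (simp add: power2_eq_square mult_ac)
  moreover have "?e * ?e = 1"
    using qchar_nonzero[of "-1::'a"] by auto
  ultimately have "?e * (?e * gauss_sum 1 ^ 2) = ?e * of_nat CARD('a)"
    by simp
  then show ?thesis
    by (simp add: mult.assoc[symmetric] \<open>?e * ?e = 1\<close>)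
qed

lemma gauss_sum_1_eq:
  obtains z where "z \<in> {1, -1, \<i>, -\<i>}" and "gauss_sum 1 = z * complex_of_real (sqrt (real p) ^ m)"
proof -
  define s where "s = complex_of_real (sqrt (real p) ^ m)"
  have "(sqrt (real p) ^ m) ^ 2 = real p ^ m"
    by (simp flip: power_mult add: mult.commute[of m] power_mult)
  then have "s ^ 2 = of_nat CARD('a)"
    unfolding s_def card_field by (metis of_real_power of_real_of_nat_eq of_nat_power)
  have "s \<noteq> 0"
    using p_pos by (simp add: s_def)
  define z where "z = gauss_sum 1 / s"
  have z2: "z ^ 2 = of_int (qchar (-1::'a))"
    using gauss_sum_1_square \<open>s ^ 2 = _\<close> \<open>s \<noteq> 0\<close> by (simp add: z_def power_divide)
  have "z \<in> {1, -1, \<i>, -\<i>}"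
  proof (cases "qchar (-1::'a) = 1")
    case True
    then show ?thesis
      using z2 by (auto simp: power2_eq_1_iff)
  next
    case False
    then have "z ^ 2 = -1"
      using z2 qchar_nonzero[of "-1::'a"] by simp
    then have "(z - \<i>) * (z + \<i>) = 0"
      by (simp add: algebra_simps power2_eq_square)
    then show ?thesis
      by (auto simp: eq_neg_iff_add_eq_0)
  qed
  moreover have "gauss_sum 1 = z * s"
    using \<open>s \<noteq> 0\<close> by (simp add: z_def)
  ultimately show ?thesis
    using that unfolding s_def by blast
qed

end

section \<open>Bent functions with a quadratic-Gauss-sum Walsh spectrum\<close>

lemma sum_Vsp:
  "(\<Sum>v\<in>Vsp p. f v) = (\<Sum>x\<in>UNIV. \<Sum>y1\<in>{0..<int p}. \<Sum>y2\<in>{0..<int p}. f (x, y1, y2))"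
  by (simp add: Vsp_def sum.cartesian_product)

lemma power4_eq_1_and_power_odd_eq_1:
  fixes u :: "'a::monoid_mult"
  assumes "u ^ 4 = 1" and "u ^ n = 1" and "odd n"
  shows "u = 1"
proof -
  have "u ^ n = (u ^ 4) ^ (n div 4) * u ^ (n mod 4)"
    by (simp flip: power_mult power_add)
  then have "u ^ (n mod 4) = 1"
    using assms(1,2) by simp
  moreover have "n mod 4 = 1 \<or> n mod 4 = 3"
    using assms(3) by presburger
  moreover have "u ^ 4 = u * u ^ 3"
    by (simp flip: power_Suc)
  ultimately show ?thesis
    using assms(1) by auto
qed

text \<open>Since \<open>p\<close> is odd, a fourth root of unity cannot absorb a nontrivial \<open>p\<close>-th root of unity.\<close>
lemma fourth_root_times_ep_inject:
  assumes "odd p" and z: "z \<in> {1, -1, \<i>, -\<i>}" and z': "z' \<in> {1, -1, \<i>, -\<i>}"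
    and k: "k \<in> {0..<int p}" and k': "k' \<in> {0..<int p}"
    and eq: "z * ep p k = z' * ep p k'"
  shows "k = k'"
proof -
  have p: "p > 0"
    using assms(1) by (intro odd_pos)
  define u where "u = ep p (k - k')"
  have "ep p k = u * ep p k'"
    by (simp add: u_def ep_add[symmetric])
  then have "(z * u) * ep p k' = z' * ep p k'"
    using eq by (simp add: mult_ac)
  moreover have "ep p k' \<noteq> 0"
    by (metis norm_ep norm_zero zero_neq_one)
  ultimately have "z * u = z'"
    by simp
  then have "z ^ 4 * u ^ 4 = z' ^ 4"
    by (simp flip: power_mult_distrib)
  moreover have "z ^ 4 = 1" "z' ^ 4 = 1"
    using z z' by (auto simp: power4_eq_xxxx)
  ultimately have "u ^ 4 = 1"
    by simp
  moreover have "u ^ p = 1"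
    using ep_eq_1_iff[OF p] by (simp add: u_def ep_power)
  ultimately have "u = 1"
    using assms(1) by (rule power4_eq_1_and_power_odd_eq_1)
  then have "k mod int p = k' mod int p"
    using ep_eq_1_iff[OF p] by (simp add: u_def mod_eq_dvd_iff)
  then show "k = k'"
    using k k' by (simp add: mod_pos_pos_trivial)
qed

lemma bent_and_dual_eqI:
  fixes f g :: "'a::{field,finite} \<times> int \<times> int \<Rightarrow> int"
  assumes "odd p"
    and range: "\<And>b. b \<in> Vsp p \<Longrightarrow> g b \<in> {0..<int p}"
    and walsh: "\<And>b. b \<in> Vsp p \<Longrightarrow> \<exists>z\<in>{1, -1, \<i>, -\<i>}.
                  walsh p m f b = z * complex_of_real (sqrt (real p) ^ (m + 2)) * ep p (g b)"
  shows "bent p m f" and "\<And>b. b \<in> Vsp p \<Longrightarrow> dual p m f b = g b"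
proof -
  let ?S = "complex_of_real (sqrt (real p) ^ (m + 2))"
  have "?S \<noteq> 0"
    using odd_pos[OF assms(1)] by simp
  have "norm z = 1" if "z \<in> {1, -1, \<i>, -\<i>}" for z :: complex
    using that by auto
  then show "bent p m f"
    unfolding bent_def using walsh by (force simp: norm_mult norm_power)
  fix b :: "'a \<times> int \<times> int"
  assume b: "b \<in> Vsp p"
  show "dual p m f b = g b"
    unfolding dual_def
  proof (rule the_equality)
    fix k
    assume "k \<in> {0..<int p} \<and> (\<exists>z\<in>{1, -1, \<i>, -\<i>}. walsh p m f b = z * ?S * ep p k)"
    then obtain z where k: "k \<in> {0..<int p}" and z: "z \<in> {1, -1, \<i>, -\<i>}"
      and wk: "walsh p m f b = z * ?S * ep p k"
      by blast
    obtain z' where z': "z' \<in> {1, -1, \<i>, -\<i>}" and wg: "walsh p m f b = z' * ?S * ep p (g b)"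
      using walsh[OF b] by blast
    have "?S * (z * ep p k) = ?S * (z' * ep p (g b))"
      using wk wg by (simp only: mult_ac)
    then have "z * ep p k = z' * ep p (g b)"
      using \<open>?S \<noteq> 0\<close> by (metis mult_left_cancel)
    then show "k = g b"
      by (rule fourth_root_times_ep_inject[OF assms(1) z z' k range[OF b]])
  qed (use range[OF b] walsh[OF b] in blast)
qed

definition quadratic_fun :: "nat \<Rightarrow> nat \<Rightarrow> 'a::{field,finite} \<Rightarrow> 'a \<Rightarrow> ('a \<times> int \<times> int) \<Rightarrow> int" where
  "quadratic_fun p m \<alpha> \<beta> = (\<lambda>(x, y1, y2).
     (tr p m (x ^ 2) + (y1 + tr p m (\<alpha> * x ^ 2)) * (y2 + tr p m (\<beta> * x ^ 2))) mod int p)"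

locale quadratic_fun_setting = odd_prime_power_field p m field_type
  for p m and field_type :: "'a::{field,finite} itself" +
  fixes \<alpha> \<beta> :: 'a
  assumes lin_coeff_nonzero:
    "\<And>b1 b2. b1 \<in> {0..<int p} \<Longrightarrow> b2 \<in> {0..<int p} \<Longrightarrow> 1 + of_int b1 * \<alpha> + of_int b2 * \<beta> \<noteq> 0"
begin

abbreviation F :: "'a \<times> int \<times> int \<Rightarrow> int" where
  "F \<equiv> quadratic_fun p m \<alpha> \<beta>"

abbreviation lin_coeff :: "int \<Rightarrow> int \<Rightarrow> 'a" where
  "lin_coeff b1 b2 \<equiv> 1 + of_int b1 * \<alpha> + of_int b2 * \<beta>"

definition dual_value :: "'a \<Rightarrow> int \<Rightarrow> int \<Rightarrow> int" where
  "dual_value a b1 b2 = (- (b1 * b2) + tr p m (- (a ^ 2 / (4 * lin_coeff b1 b2)))) mod int p"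

lemma add_char_quadratic_fun_exponent:
  "add_char (lin_coeff b1 b2 * x ^ 2 - a * x)
     = ep p (tr p m (x ^ 2) + b1 * tr p m (\<alpha> * x ^ 2) + b2 * tr p m (\<beta> * x ^ 2) - tr p m (a * x))"
proof (rule add_char_eq_ep)
  have "lin_coeff b1 b2 * x ^ 2 - a * x = x ^ 2 + of_int b1 * (\<alpha> * x ^ 2) + of_int b2 * (\<beta> * x ^ 2) - a * x"
    by (simp add: algebra_simps)
  then show "Tr (lin_coeff b1 b2 * x ^ 2 - a * x) = of_int (tr p m (x ^ 2) + b1 * tr p m (\<alpha> * x ^ 2)
      + b2 * tr p m (\<beta> * x ^ 2) - tr p m (a * x))"
    by (simp add: trace_add trace_diff trace_of_int_mult of_int_tr)
qed

text \<open>Summing over \<open>y1, y2\<close> first removes the bilinear part, leaving a quadratic Gauss sum in \<open>x\<close>.\<close>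
lemma walsh_quadratic_fun:
  assumes "lin_coeff b1 b2 \<noteq> 0"
  shows "walsh p m F (a, b1, b2) = of_nat p * ep p (- (b1 * b2))
           * (add_char (- (a ^ 2 / (4 * lin_coeff b1 b2))) * gauss_sum (lin_coeff b1 b2))"
proof -
  let ?T = "\<lambda>x. tr p m (x ^ 2) - tr p m (a * x)"
  have "walsh p m F (a, b1, b2) = (\<Sum>x\<in>UNIV. \<Sum>y1\<in>{0..<int p}. \<Sum>y2\<in>{0..<int p}.
      ep p (?T x + (y1 + tr p m (\<alpha> * x ^ 2)) * (y2 + tr p m (\<beta> * x ^ 2)) - b1 * y1 - b2 * y2))"
    unfolding walsh_def sum_Vsp using p_pos
    by (intro sum.cong refl ep_cong) (simp_all add: quadratic_fun_def ip_def mod_diff_eq algebra_simps)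
  also have "\<dots> = (\<Sum>x\<in>UNIV. of_nat p * ep p (?T x + b1 * tr p m (\<alpha> * x ^ 2)
      + b2 * tr p m (\<beta> * x ^ 2) - b1 * b2))"
    by (intro sum.cong refl sum_ep_bilinear p_pos)
  also have "\<dots> = (\<Sum>x\<in>UNIV. of_nat p * ep p (- (b1 * b2)) * add_char (lin_coeff b1 b2 * x ^ 2 - a * x))"
  proof (rule sum.cong[OF refl])
    fix x
    have "ep p (?T x + b1 * tr p m (\<alpha> * x ^ 2) + b2 * tr p m (\<beta> * x ^ 2) - b1 * b2)
        = ep p (- (b1 * b2) + (tr p m (x ^ 2) + b1 * tr p m (\<alpha> * x ^ 2)
            + b2 * tr p m (\<beta> * x ^ 2) - tr p m (a * x)))"
      by (rule arg_cong[where f = "ep p"]) (simp add: algebra_simps)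
    then show "of_nat p * ep p (?T x + b1 * tr p m (\<alpha> * x ^ 2) + b2 * tr p m (\<beta> * x ^ 2) - b1 * b2)
        = of_nat p * ep p (- (b1 * b2)) * add_char (lin_coeff b1 b2 * x ^ 2 - a * x)"
      by (simp only: add_char_quadratic_fun_exponent ep_add mult.assoc)
  qed
  also have "\<dots> = of_nat p * ep p (- (b1 * b2)) * (\<Sum>x\<in>UNIV. add_char (lin_coeff b1 b2 * x ^ 2 - a * x))"
    by (simp add: sum_distrib_left)
  finally show ?thesis
    by (simp add: sum_add_char_quadratic[OF assms])
qed

lemma dual_value_range: "dual_value a b1 b2 \<in> {0..<int p}"
  using p_pos by (simp add: dual_value_def)

lemma walsh_quadratic_fun_normal_form:
  assumes "b1 \<in> {0..<int p}" and "b2 \<in> {0..<int p}"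
  shows "\<exists>z\<in>{1, -1, \<i>, -\<i>}.
           walsh p m F (a, b1, b2) = z * complex_of_real (sqrt (real p) ^ (m + 2)) * ep p (dual_value a b1 b2)"
proof -
  let ?c = "lin_coeff b1 b2"
  let ?s = "complex_of_real (sqrt (real p) ^ m)"
  have c: "?c \<noteq> 0"
    using lin_coeff_nonzero[OF assms] .
  obtain \<zeta> where \<zeta>: "\<zeta> \<in> {1, -1, \<i>, -\<i>}" and G1: "gauss_sum 1 = \<zeta> * ?s"
    using gauss_sum_1_eq .
  have exponent: "ep p (- (b1 * b2)) * add_char (- (a ^ 2 / (4 * ?c))) = ep p (dual_value a b1 b2)"
    unfolding dual_value_def ep_mod[OF p_pos] by (simp only: ep_add add_char_def)
  have scale: "complex_of_real (sqrt (real p) ^ (m + 2)) = of_nat p * ?s"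
  proof -
    have "sqrt (real p) ^ (m + 2) = real p * sqrt (real p) ^ m"
      by (simp add: power_add)
    then show ?thesis
      by (simp only: of_real_mult of_real_of_nat_eq)
  qed
  have "walsh p m F (a, b1, b2)
      = of_nat p * ep p (- (b1 * b2)) * (add_char (- (a ^ 2 / (4 * ?c))) * (of_int (qchar ?c) * (\<zeta> * ?s)))"
    by (simp only: walsh_quadratic_fun[OF c] gauss_sum_eq_qchar[OF c] G1)
  also have "\<dots> = (of_int (qchar ?c) * \<zeta>) * (of_nat p * ?s) * (ep p (- (b1 * b2)) * add_char (- (a ^ 2 / (4 * ?c))))"
    by (simp only: mult_ac)
  also have "\<dots> = (of_int (qchar ?c) * \<zeta>) * complex_of_real (sqrt (real p) ^ (m + 2)) * ep p (dual_value a b1 b2)"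
    by (simp only: exponent scale)
  finally have "walsh p m F (a, b1, b2)
      = (of_int (qchar ?c) * \<zeta>) * complex_of_real (sqrt (real p) ^ (m + 2)) * ep p (dual_value a b1 b2)" .
  moreover have "of_int (qchar ?c) * \<zeta> \<in> {1, -1, \<i>, -\<i>}"
    using qchar_nonzero[OF c] \<zeta> by auto
  ultimately show ?thesis
    by blast
qed

lemma bent_quadratic_fun: "bent p m F"
  and dual_quadratic_fun: "(a, b1, b2) \<in> Vsp p \<Longrightarrow> dual p m F (a, b1, b2) = dual_value a b1 b2"
proof -
  let ?g = "\<lambda>(a, b1, b2). dual_value a b1 b2"
  have range: "?g b \<in> {0..<int p}" for b
    using dual_value_range by (simp add: case_prod_beta)
  have walsh: "\<exists>z\<in>{1, -1, \<i>, -\<i>}. walsh p m F b = z * complex_of_real (sqrt (real p) ^ (m + 2)) * ep p (?g b)"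
    if "b \<in> Vsp p" for b
    using that walsh_quadratic_fun_normal_form by (cases b) (auto simp: Vsp_def)
  show "bent p m F"
    using bent_and_dual_eqI(1)[OF odd_p range walsh] .
  show "dual p m F (a, b1, b2) = dual_value a b1 b2" if "(a, b1, b2) \<in> Vsp p"
    using bent_and_dual_eqI(2)[OF odd_p range walsh that] by simp
qed

lemma qchar_dual_coeff:
  fixes c :: 'a
  assumes "c \<noteq> 0"
  shows "qchar (- (1 / (4 * c))) = qchar (-1::'a) * qchar c"
proof -
  have d: "1 / (2 * c) \<noteq> 0"
    using assms two_neq_zero by simp
  have "- (1 / (4 * c)) = (-1) * (c * (1 / (2 * c)) ^ 2)"
    using assms two_neq_zero by (simp add: power2_eq_square field_simps)
  then have "qchar (- (1 / (4 * c))) = qchar (-1::'a) * (qchar c * qchar ((1 / (2 * c)) ^ 2))"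
    by (simp only: qchar_mult)
  then show ?thesis
    by (simp add: qchar_square[OF d])
qed

text \<open>The dual is again of the form \<open>-y1 y2 + Tr(c' x^2)\<close>, so its Walsh value at \<open>0\<close> factors
  into a Gauss sum over \<open>x\<close> and the character sum over \<open>(y1, y2)\<close>.\<close>
lemma walsh_dual_quadratic_fun_0:
  "walsh p m (dual p m F) (0, 0, 0) = of_int (qchar (-1::'a)) * gauss_sum 1
     * (\<Sum>y1\<in>{0..<int p}. \<Sum>y2\<in>{0..<int p}. of_int (qchar (lin_coeff y1 y2)) * ep p (- (y1 * y2)))"
proof -
  have "walsh p m (dual p m F) (0, 0, 0) = (\<Sum>x\<in>UNIV. \<Sum>y1\<in>{0..<int p}. \<Sum>y2\<in>{0..<int p}.
      ep p (- (y1 * y2)) * add_char (- (1 / (4 * lin_coeff y1 y2)) * x ^ 2))"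
    unfolding walsh_def sum_Vsp
  proof (intro sum.cong refl)
    fix x :: 'a and y1 y2
    assume "y1 \<in> {0..<int p}" "y2 \<in> {0..<int p}"
    then have "dual p m F (x, y1, y2) = dual_value x y1 y2"
      by (intro dual_quadratic_fun) (simp add: Vsp_def)
    moreover have "ip p m (0, 0, 0) (x, y1, y2) = 0"
      by (simp add: ip_def tr_0)
    moreover have "- (x ^ 2 / (4 * lin_coeff y1 y2)) = - (1 / (4 * lin_coeff y1 y2)) * x ^ 2"
      by simp
    ultimately show "ep p (dual p m F (x, y1, y2) - ip p m (0, 0, 0) (x, y1, y2))
        = ep p (- (y1 * y2)) * add_char (- (1 / (4 * lin_coeff y1 y2)) * x ^ 2)"
      unfolding dual_value_def by (simp only: diff_zero ep_mod[OF p_pos] ep_add add_char_def)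
  qed
  also have "\<dots> = (\<Sum>y1\<in>{0..<int p}. \<Sum>y2\<in>{0..<int p}.
      ep p (- (y1 * y2)) * gauss_sum (- (1 / (4 * lin_coeff y1 y2))))"
    by (subst sum.swap) (simp add: sum.swap[of _ UNIV] gauss_sum_def sum_distrib_left)
  also have "\<dots> = (\<Sum>y1\<in>{0..<int p}. \<Sum>y2\<in>{0..<int p}.
      of_int (qchar (-1::'a)) * gauss_sum 1 * (of_int (qchar (lin_coeff y1 y2)) * ep p (- (y1 * y2))))"
  proof (intro sum.cong refl)
    fix y1 y2
    assume "y1 \<in> {0..<int p}" "y2 \<in> {0..<int p}"
    then have c: "lin_coeff y1 y2 \<noteq> 0"
      by (rule lin_coeff_nonzero)
    then have nz: "- (1 / (4 * lin_coeff y1 y2)) \<noteq> 0"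
      using four_neq_zero by (simp only: neg_equal_0_iff_equal divide_eq_0_iff mult_eq_0_iff one_neq_zero simp_thms)
    then have "gauss_sum (- (1 / (4 * lin_coeff y1 y2)))
        = of_int (qchar (-1::'a) * qchar (lin_coeff y1 y2)) * gauss_sum 1"
      by (simp only: gauss_sum_eq_qchar[OF nz] qchar_dual_coeff[OF c])
    then show "ep p (- (y1 * y2)) * gauss_sum (- (1 / (4 * lin_coeff y1 y2)))
        = of_int (qchar (-1::'a)) * gauss_sum 1 * (of_int (qchar (lin_coeff y1 y2)) * ep p (- (y1 * y2)))"
      by (simp add: mult_ac)
  qed
  finally show ?thesis
    by (simp add: sum_distrib_left)
qed

lemma non_dual_bent_quadratic_fun:
  assumes "cmod (\<Sum>y1\<in>{0..<int p}. \<Sum>y2\<in>{0..<int p}.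
             of_int (qchar (lin_coeff y1 y2)) * ep p (- (y1 * y2))) \<noteq> real p"
  shows "non_dual_bent p m F"
proof -
  obtain \<zeta> where \<zeta>: "\<zeta> \<in> {1, -1, \<i>, -\<i>}" and G1: "gauss_sum 1 = \<zeta> * complex_of_real (sqrt (real p) ^ m)"
    using gauss_sum_1_eq .
  have "cmod (of_int (qchar (-1::'a)) * gauss_sum 1) = sqrt (real p) ^ m"
    using qchar_nonzero[of "-1::'a"] \<zeta> G1 by (auto simp: norm_mult norm_power)
  then have "cmod (walsh p m (dual p m F) (0, 0, 0)) \<noteq> sqrt (real p) ^ m * real p"
    using assms p_pos by (simp add: walsh_dual_quadratic_fun_0 norm_mult del: of_int_minus)
  moreover have "sqrt (real p) ^ (m + 2) = sqrt (real p) ^ m * real p"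
    by (simp add: power_add)
  moreover have "((0::'a), (0::int), (0::int)) \<in> Vsp p"
    using p_pos by (simp add: Vsp_def)
  ultimately have "\<not> bent p m (dual p m F)"
    unfolding bent_def by force
  then show ?thesis
    using bent_quadratic_fun by (simp add: non_dual_bent_def)
qed

end

theorem corollary2:
  fixes p m :: nat and \<alpha> \<beta> :: "'a::{field,finite}"
  assumes "prime p" and "odd p" and "m > 0"
    and "CARD('a) = p ^ m"
    and lin_indep: "\<forall>a\<in>{0..<int p}. \<forall>b\<in>{0..<int p}. \<forall>c\<in>{0..<int p}.
           of_int a + of_int b * \<alpha> + of_int c * \<beta> = 0 \<longrightarrow> a = 0 \<and> b = 0 \<and> c = 0"
    and "cmod (\<Sum>y1\<in>{0..<int p}. \<Sum>y2\<in>{0..<int p}.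
           of_int (qchar (1 + of_int y1 * \<alpha> + of_int y2 * \<beta>)) * ep p (- (y1 * y2))) \<noteq> real p"
  shows "non_dual_bent p m
           (\<lambda>(x, y1, y2). (tr p m (x ^ 2)
              + (y1 + tr p m (\<alpha> * x ^ 2)) * (y2 + tr p m (\<beta> * x ^ 2))) mod int p)"
proof -
  have one: "(1::int) \<in> {0..<int p}"
    using prime_gt_1_nat[OF \<open>prime p\<close>] by simp
  have "1 + of_int b1 * \<alpha> + of_int b2 * \<beta> \<noteq> 0" if "b1 \<in> {0..<int p}" "b2 \<in> {0..<int p}" for b1 b2
    using lin_indep[rule_format, OF one that] by auto
  then interpret quadratic_fun_setting p m "TYPE('a)" \<alpha> \<beta>
    using assms(1-4) by unfold_locales auto
  show ?thesis
    using non_dual_bent_quadratic_fun[OF assms(6)] by (simp only: quadratic_fun_def)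
qed

end
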